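(* Let $\mathcal R$ be a sum-bucket game and $\mathbf p$ a routing. If a greedy move by player $i$ takes $\mathbf p$ to a routing $\mathbf p'$, then $\mathbf p'<\mathbf p$ in the order defined below (i.e. $M(\mathbf p')<M(\mathbf p)$).
   Context: A routing game $(\mathbf N,G,\mathcal P)$: players $\{1,\dots,N\}$ ($N\ge1$), a finite graph $G=(V,E)$, and for each player $i$ a nonempty finite set $\mathcal P_i$ of paths (each with at least one edge) from $u_i$ to $v_i$; $\mathcal P=\bigcup_i\mathcal P_i$, $L=\max_{p\in\mathcal P}|p|$ (number of edges). A routing is $\mathbf p=[p_1,\dots,p_N]$ with $p_i\in\mathcal P_i$; $(p_i';\mathbf p_{-i})$ replaces $p_i$ by $p_i'$. Sum-bucket game: for $k=0,1,\dots,\lceil\lg L\rceil$ the bucket $B_k$ is the set of paths in $\mathcal P$ with length in $[2^k,2^{k+1})$, and $B(q)$ is the index of the bucket of path $q$. The normalized length of a path $q$ is $\overline D_q=2^{B(q)+1}-1$. For a routing $\mathbf p$, an edge $e$ and a path $q$, $\overline C_{e,q}(\mathbf p)$ is the number of players $j$ with $e\in p_j$ and $B(p_j)=B(q)$, and $\overline C_q(\mathbf p)=\max_{e\in q}\overline C_{e,q}(\mathbf p)$. Player cost: $pc_i(\mathbf p)=\overline C_i(\mathbf p)+\overline D_i(\mathbf p)$ with $\overline C_i=\overline C_{p_i}$, $\overline D_i=\overline D_{p_i}$. A greedy move by player $i$ takes $\mathbf p$ to $(p_i';\mathbf p_{-i})$ with $p_i'\in\mathcal P_i$ and strictly smaller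 $pc_i$. Order: $r=N+2L-1$; $M(\mathbf p)=[m_1(\mathbf p),\dots,m_r(\mathbf p)]$ where $m_j(\mathbf p)$ is the number of players with cost $j$ in $\mathbf p$; $M(\mathbf p')<M(\mathbf p)$ if there is $j$ with $m_k(\mathbf p')=m_k(\mathbf p)$ for all $k>j$ and $m_j(\mathbf p')<m_j(\mathbf p)$. *)

theory Defs
  imports Main
begin

text \<open>A finite graph G = (V, E) with E a set of (directed) edges, given as vertex pairs.
A path is represented by its vertex sequence [x0, ..., xk]; it has k edges.\<close>

definition path_edges :: "'v list \<Rightarrow> ('v \<times> 'v) set" where
  "path_edges xs = set (zip xs (tl xs))"

definition plen :: "'v list \<Rightarrow> nat" where
  "plen xs = length xs - 1"

definition is_path :: "('v \<times> 'v) set \<Rightarrow> 'v \<Rightarrow> 'v \<Rightarrow> 'v list \<Rightarrow> bool" where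
  "is_path E u v xs \<longleftrightarrow> length xs \<ge> 2 \<and> hd xs = u \<and> last xs = v \<and> distinct xs
     \<and> (\<forall>j. Suc j < length xs \<longrightarrow> (xs ! j, xs ! Suc j) \<in> E)"

definition routing_game ::
  "nat \<Rightarrow> 'v set \<Rightarrow> ('v \<times> 'v) set \<Rightarrow> (nat \<Rightarrow> 'v) \<Rightarrow> (nat \<Rightarrow> 'v) \<Rightarrow> (nat \<Rightarrow> 'v list set) \<Rightarrow> bool" where
  "routing_game N V E u v P \<longleftrightarrow> N \<ge> 1 \<and> finite V \<and> E \<subseteq> V \<times> V \<and>
     (\<forall>i<N. finite (P i) \<and> P i \<noteq> {} \<and> (\<forall>p\<in>P i. is_path E (u i) (v i) p))"

definition all_paths :: "nat \<Rightarrow> (nat \<Rightarrow> 'v list set) \<Rightarrow> 'v list set" where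
  "all_paths N P = (\<Union>i<N. P i)"

definition Lmax :: "nat \<Rightarrow> (nat \<Rightarrow> 'v list set) \<Rightarrow> nat" where
  "Lmax N P = Max (plen ` all_paths N P)"

definition is_routing :: "nat \<Rightarrow> (nat \<Rightarrow> 'v list set) \<Rightarrow> (nat \<Rightarrow> 'v list) \<Rightarrow> bool" where
  "is_routing N P p \<longleftrightarrow> (\<forall>i<N. p i \<in> P i)"

definition bucket :: "'v list \<Rightarrow> nat" where
  "bucket q = (THE k. 2 ^ k \<le> plen q \<and> plen q < 2 ^ (k + 1))"

definition norm_len :: "'v list \<Rightarrow> nat" where
  "norm_len q = 2 ^ (bucket q + 1) - 1"

definition edge_cong :: "nat \<Rightarrow> (nat \<Rightarrow> 'v list) \<Rightarrow> ('v \<times> 'v) \<Rightarrow> 'v list \<Rightarrow> nat" where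
  "edge_cong N p e q = card {j. j < N \<and> e \<in> path_edges (p j) \<and> bucket (p j) = bucket q}"

definition path_cong :: "nat \<Rightarrow> (nat \<Rightarrow> 'v list) \<Rightarrow> 'v list \<Rightarrow> nat" where
  "path_cong N p q = Max ((\<lambda>e. edge_cong N p e q) ` path_edges q)"

definition player_cost :: "nat \<Rightarrow> (nat \<Rightarrow> 'v list) \<Rightarrow> nat \<Rightarrow> nat" where
  "player_cost N p i = path_cong N p (p i) + norm_len (p i)"

definition greedy_move ::
  "nat \<Rightarrow> (nat \<Rightarrow> 'v list set) \<Rightarrow> (nat \<Rightarrow> 'v list) \<Rightarrow> nat \<Rightarrow> (nat \<Rightarrow> 'v list) \<Rightarrow> bool" where
  "greedy_move N P p i p' \<longleftrightarrow> i < N \<and> (\<exists>q\<in>P i. p' = p(i := q)) \<and>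
     player_cost N p' i < player_cost N p i"

definition order_r :: "nat \<Rightarrow> (nat \<Rightarrow> 'v list set) \<Rightarrow> nat" where
  "order_r N P = N + 2 * Lmax N P - 1"

definition m_count :: "nat \<Rightarrow> (nat \<Rightarrow> 'v list) \<Rightarrow> nat \<Rightarrow> nat" where
  "m_count N p j = card {i. i < N \<and> player_cost N p i = j}"

definition M_vec :: "nat \<Rightarrow> nat \<Rightarrow> (nat \<Rightarrow> 'v list) \<Rightarrow> nat list" where
  "M_vec N r p = map (m_count N p) [1..<r+1]"

definition M_less :: "nat \<Rightarrow> nat list \<Rightarrow> nat list \<Rightarrow> bool" where
  "M_less r Mp' Mp \<longleftrightarrow> (\<exists>j\<in>{1..r}. (\<forall>k. j < k \<and> k \<le> r \<longrightarrow> Mp' ! (k - 1) = Mp ! (k - 1))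
       \<and> Mp' ! (j - 1) < Mp ! (j - 1))"

end

theory Submission
  imports Defs
begin

text \<open>
  The argument has a combinatorial core and a game-specific part.  The core
  (lemma count_profile_decrease) says: if, when passing from cost function f to
  cost function g, some player i strictly improves and every player whose cost
  changes either improves or ends strictly below the old cost of i, then at the
  largest old cost K among the changed players the number of players with cost K
  drops, while the counts above K are unchanged.

  The game-specific part shows that a greedy move of player i has this shape: a
  player j whose cost rises must share an edge of the new path of i inside the
  same bucket, hence has the same normalized length and at most the congestion
  of i, so its new cost is at most the new cost of i
  (lemma greedy_move_raised_cost_bounded).  Finally all costs lie in 1..r
  (lemma player_cost_bounds), so the level K is a legal index of M.
\<close>

lemma count_profile_decrease:
  fixes f g :: "nat \<Rightarrow> nat"
  assumes "i < N" "g i < f i"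
    and dominated: "\<forall>j<N. f j \<noteq> g j \<longrightarrow> g j < f j \<or> g j < f i"
  shows "\<exists>K. (\<exists>s<N. f s = K)
     \<and> (\<forall>k>K. card {j. j<N \<and> g j = k} = card {j. j<N \<and> f j = k})
     \<and> card {j. j<N \<and> g j = K} < card {j. j<N \<and> f j = K}"
proof -
  define S where "S = {j. j<N \<and> f j \<noteq> g j}"
  define K where "K = Max (f ` S)"
  have "i \<in> S" "finite S" using assms unfolding S_def by auto
  then have f_le_K: "\<forall>j\<in>S. f j \<le> K" and K_attained: "K \<in> f ` S"
    unfolding K_def by (auto intro: Max_in)
  have g_less_K: "\<forall>j\<in>S. g j < K"
    using dominated f_le_K \<open>i \<in> S\<close> unfolding S_def by fastforce
  obtain s where s: "s \<in> S" "f s = K" using K_attained by blast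
  have above_K: "{j. j<N \<and> g j = k} = {j. j<N \<and> f j = k}" if "K < k" for k
    using that f_le_K g_less_K unfolding S_def by force
  have "{j. j<N \<and> g j = K} \<subseteq> {j. j<N \<and> f j = K}"
    using g_less_K unfolding S_def by force
  moreover have "s \<in> {j. j<N \<and> f j = K} - {j. j<N \<and> g j = K}"
    using s g_less_K unfolding S_def by auto
  ultimately have "{j. j<N \<and> g j = K} \<subset> {j. j<N \<and> f j = K}" by blast
  then have "card {j. j<N \<and> g j = K} < card {j. j<N \<and> f j = K}"
    by (intro psubset_card_mono) auto
  then show ?thesis using above_K s unfolding S_def by auto
qed

lemma M_vec_nth:
  assumes "1 \<le> k" "k \<le> r"
  shows "M_vec N r p ! (k - 1) = m_count N p k"
  using assms unfolding M_vec_def by (simp del: upt_Suc add: nth_upt)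

lemma M_less_of_count_decrease:
  assumes "1 \<le> K" "K \<le> r"
    and "\<forall>k>K. m_count N p' k = m_count N p k"
    and "m_count N p' K < m_count N p K"
  shows "M_less r (M_vec N r p') (M_vec N r p)"
  unfolding M_less_def
proof (intro bexI[of _ K] conjI allI impI)
  fix k assume "K < k \<and> k \<le> r"
  then show "M_vec N r p' ! (k - 1) = M_vec N r p ! (k - 1)"
    using assms(3) M_vec_nth[of k r N p] M_vec_nth[of k r N p'] by simp
qed (use assms M_vec_nth[of K r N p] M_vec_nth[of K r N p'] in auto)

text \<open>Every positive integer lies in exactly one dyadic interval [2^k, 2^(k+1));
  this is what makes the bucket of a path well defined.\<close>
lemma power_two_interval_exists:
  "n \<ge> 1 \<Longrightarrow> \<exists>k. 2 ^ k \<le> n \<and> n < (2::nat) ^ (k + 1)"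
proof (induction n rule: less_induct)
  case (less n)
  show ?case
  proof (cases "n = 1")
    case True then show ?thesis by (intro exI[of _ 0]) auto
  next
    case False
    then have "n div 2 \<ge> 1" "n div 2 < n" using less.prems by auto
    then obtain k where "2 ^ k \<le> n div 2" "n div 2 < (2::nat) ^ (k + 1)"
      using less.IH by blast
    then show ?thesis by (intro exI[of _ "k + 1"]) auto
  qed
qed

lemma power_two_interval_unique:
  assumes "2 ^ k \<le> n" "n < (2::nat) ^ (k + 1)" "2 ^ l \<le> n" "n < (2::nat) ^ (l + 1)"
  shows "k = l"
proof -
  have "(2::nat) ^ k < 2 ^ (l + 1)" "(2::nat) ^ l < 2 ^ (k + 1)"
    using assms by linarith+
  then have "k < l + 1" "l < k + 1"
    using power_less_imp_less_exp[of "2::nat"] by (metis one_less_numeral_iff semiring_norm(76))+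
  then show ?thesis by simp
qed

lemma bucket_lower_bound: "plen q \<ge> 1 \<Longrightarrow> 2 ^ bucket q \<le> plen q"
proof -
  assume "plen q \<ge> 1"
  then obtain k where k: "2 ^ k \<le> plen q \<and> plen q < (2::nat) ^ (k + 1)"
    using power_two_interval_exists by blast
  have "bucket q = k" unfolding bucket_def
    by (rule the_equality) (use k power_two_interval_unique in blast)+
  then show ?thesis using k by simp
qed

lemma norm_len_bounds:
  assumes "1 \<le> plen q" "plen q \<le> L"
  shows "1 \<le> norm_len q" "norm_len q \<le> 2 * L - 1"
proof -
  have "2 ^ (bucket q + 1) \<le> 2 * L" using bucket_lower_bound[OF assms(1)] assms(2) by simp
  then show "norm_len q \<le> 2 * L - 1" unfolding norm_len_def by simp
  have "(1::nat) \<le> 2 ^ bucket q" by simp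
  then show "1 \<le> norm_len q" unfolding norm_len_def power_add power_one_right by linarith
qed

lemma path_edges_finite: "finite (path_edges q)"
  unfolding path_edges_def by simp

lemma path_edges_nonempty: "length q \<ge> 2 \<Longrightarrow> path_edges q \<noteq> {}"
  unfolding path_edges_def by (cases q; cases "tl q") auto

lemma edge_cong_same_bucket: "bucket x = bucket y \<Longrightarrow> edge_cong N p e x = edge_cong N p e y"
  unfolding edge_cong_def by simp

lemma edge_cong_le_path_cong: "e \<in> path_edges q \<Longrightarrow> edge_cong N p e q \<le> path_cong N p q"
  unfolding path_cong_def using path_edges_finite by (intro Max_ge) auto

lemma path_cong_attained:
  assumes "path_edges q \<noteq> {}"
  obtains e where "e \<in> path_edges q" "edge_cong N p e q = path_cong N p q"
proof -
  have "path_cong N p q \<in> (\<lambda>e. edge_cong N p e q) ` path_edges q"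
    unfolding path_cong_def using assms path_edges_finite by (intro Max_in) auto
  then show ?thesis using that by (metis (no_types, lifting) imageE)
qed

lemma path_cong_le_players:
  assumes "path_edges q \<noteq> {}"
  shows "path_cong N p q \<le> N"
proof -
  have "edge_cong N p e q \<le> card {..<N}" for e
    unfolding edge_cong_def by (intro card_mono) auto
  then show ?thesis
    using assms path_edges_finite unfolding path_cong_def by (subst Max_le_iff) auto
qed

lemma edge_cong_raised:
  assumes "edge_cong N p e x < edge_cong N (p(i := q)) e x"
  shows "e \<in> path_edges q \<and> bucket q = bucket x"
proof (rule ccontr)
  assume "\<not> (e \<in> path_edges q \<and> bucket q = bucket x)"
  then have "{j. j < N \<and> e \<in> path_edges ((p(i := q)) j) \<and> bucket ((p(i := q)) j) = bucket x}
     \<subseteq> {j. j < N \<and> e \<in> path_edges (p j) \<and> bucket (p j) = bucket x}"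
    by auto
  then have "edge_cong N (p(i := q)) e x \<le> edge_cong N p e x"
    unfolding edge_cong_def by (intro card_mono) auto
  then show False using assms by simp
qed

text \<open>When player i switches to q, any other player whose cost rises ends with
  cost at most the new cost of i: the congestion increase happens on an edge of
  q within the bucket of q, which also fixes the normalized length.\<close>
lemma greedy_move_raised_cost_bounded:
  assumes "j \<noteq> i" and p'_def: "p' = p(i := q)"
    and raised: "player_cost N p j < player_cost N p' j"
  shows "player_cost N p' j \<le> player_cost N p' i"
proof -
  have pj: "p' j = p j" using assms by simp
  have cong_raised: "path_cong N p (p j) < path_cong N p' (p j)"
    using raised pj unfolding player_cost_def by simp
  have "path_edges (p j) \<noteq> {}"
    using cong_raised unfolding path_cong_def by auto
  then obtain e where e: "e \<in> path_edges (p j)" "edge_cong N p' e (p j) = path_cong N p' (p j)"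
    using path_cong_attained by blast
  have "edge_cong N p e (p j) < edge_cong N (p(i := q)) e (p j)"
    using edge_cong_le_path_cong[OF e(1), of N p] e(2) cong_raised p'_def by simp
  then have q_shares: "e \<in> path_edges q" "bucket q = bucket (p j)"
    using edge_cong_raised by blast+
  have "path_cong N p' (p j) = edge_cong N p' e q"
    using e(2) edge_cong_same_bucket[OF q_shares(2)] by simp
  also have "\<dots> \<le> path_cong N p' q" using edge_cong_le_path_cong[OF q_shares(1)] .
  finally have "path_cong N p' (p j) \<le> path_cong N p' q" .
  moreover have "norm_len (p j) = norm_len q" unfolding norm_len_def using q_shares by simp
  ultimately show ?thesis using pj p'_def unfolding player_cost_def by simp
qed

text \<open>Every player's cost lies in 1..r: congestion is at most N and the
  normalized length is between 1 and 2L-1.\<close>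
lemma player_cost_bounds:
  assumes game: "routing_game N V E u v P" and "is_routing N P p" and "s < N"
  shows "1 \<le> player_cost N p s" "player_cost N p s \<le> order_r N P"
proof -
  have ps: "p s \<in> P s" using assms unfolding is_routing_def by auto
  then have "is_path E (u s) (v s) (p s)" using game \<open>s < N\<close> unfolding routing_game_def by auto
  then have len: "length (p s) \<ge> 2" unfolding is_path_def by auto
  then have "1 \<le> plen (p s)" unfolding plen_def by auto
  moreover have "plen (p s) \<le> Lmax N P"
  proof -
    have "finite (all_paths N P)" "p s \<in> all_paths N P"
      using game ps \<open>s < N\<close> unfolding all_paths_def routing_game_def by auto
    then show ?thesis unfolding Lmax_def by auto
  qed
  ultimately have "1 \<le> norm_len (p s)" "norm_len (p s) \<le> 2 * Lmax N P - 1"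
    using norm_len_bounds by blast+
  moreover have "path_cong N p (p s) \<le> N"
    using path_cong_le_players[OF path_edges_nonempty[OF len]] .
  ultimately show "1 \<le> player_cost N p s" "player_cost N p s \<le> order_r N P"
    unfolding player_cost_def order_r_def by auto
qed

theorem mainTheorem9:
  fixes N :: nat and V :: "'v set" and E :: "('v \<times> 'v) set"
    and u v :: "nat \<Rightarrow> 'v" and P :: "nat \<Rightarrow> 'v list set"
    and p p' :: "nat \<Rightarrow> 'v list" and i :: nat
  assumes "routing_game N V E u v P"
    and "is_routing N P p"
    and "greedy_move N P p i p'"
  shows "M_less (order_r N P) (M_vec N (order_r N P) p') (M_vec N (order_r N P) p)"
proof -
  obtain q where "p' = p(i := q)" and "i < N"
    and improves: "player_cost N p' i < player_cost N p i"
    using assms(3) unfolding greedy_move_def by blast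
  then have "\<forall>j<N. player_cost N p j \<noteq> player_cost N p' j \<longrightarrow>
      player_cost N p' j < player_cost N p j \<or> player_cost N p' j < player_cost N p i"
    using greedy_move_raised_cost_bounded by (metis le_less_trans linorder_neqE_nat)
  then obtain K s where "s < N" "player_cost N p s = K"
    and "\<forall>k>K. m_count N p' k = m_count N p k" "m_count N p' K < m_count N p K"
    using count_profile_decrease[where f = "player_cost N p" and g = "player_cost N p'", OF \<open>i < N\<close> improves] unfolding m_count_def by blast
  moreover have "1 \<le> K" "K \<le> order_r N P"
    using player_cost_bounds[OF assms(1,2) \<open>s < N\<close>] \<open>player_cost N p s = K\<close> by auto
  ultimately show ?thesis by (intro M_less_of_count_decrease) auto
qed

end
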